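(* Let $F\in L^2(\mu)$ and $m\in\mathbb N$. Then $F\in\mathcal D^{m,2}$ if and only if \[ \sup_{0<\lambda<1}\partial_\lambda^m\left(\int_{\mathcal S'_{\mathbb C}}|SF(\lambda u)|^2\,d\nu(u)\right)<\infty . \]
   Context: Let $\mu$ be the white noise (standard Gaussian) measure on the tempered distributions $\mathcal S'=\mathcal S'(\mathbb R;\mathbb R)$, i.e. $\int e^{i\langle\xi,x\rangle}d\mu(x)=e^{-|\xi|^2/2}$ for $\xi$ in the Schwartz space $\mathcal S$, where $|\cdot|$ is the $L^2(\mathbb R,dx)$ norm. Every $F\in L^2(\mu)$ (complex valued) has a Wiener–Itô chaos decomposition $F=\sum_{n\ge0}\langle F^{(n)},:\cdot^{\otimes n}:\rangle$ with symmetric kernels $F^{(n)}\in L^2(\mathbb R^n,dx)_{\mathbb C}$ and $\|F\|^2_{L^2(\mu)}=\sum_n n!|F^{(n)}|^2$. The $S$-transform is $SF(h)=\sum_n\langle F^{(n)},h^{\otimes n}\rangle$ for $h\in\mathcal S_{\mathbb C}$ (equivalently $SF(h)=\int\exp(\langle h,\omega\rangle-\tfrac12\langle h,h\rangle)F(\omega)d\mu(\omega)$). Let $\nu$ be the Gaussian measure on $\mathcal S'_{\mathbb C}$ with $\int\exp(i\,\mathrm{Re}\langle h,\bar u\rangle)d\nu(u)=\exp(-\tfrac14\langle h,\bar h\rangle)$; for square-integrable symmetric kernels the monomials $u\mapsto\langle F^{(n)},u^{\otimes n}\rangle$ are defined in $L^2(\nu)$, mutually orthogonal for different $n$, with $\int|\langle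 F^{(n)},u^{\otimes n}\rangle|^2d\nu=n!|F^{(n)}|^2$, and $SF(\lambda u):=\sum_n\lambda^n\langle F^{(n)},u^{\otimes n}\rangle$. For $\alpha\in\mathbb R$, the Malliavin–Watanabe–Sobolev space $\mathcal D^{\alpha,2}$ consists of those (generalized) chaos series $\Phi$ with square-integrable symmetric kernels $\Phi^{(n)}$ such that $\|\Phi\|^2_{\alpha,2}=\sum_{n\ge0}(1+n^\alpha)\,n!\,|\Phi^{(n)}|^2<\infty$. *)

theory Defs
  imports "HOL-Probability.Probability"
begin

text \<open>Lebesgue measure on R^n, realised as the product measure on functions
  nat => real indexed by {..<n} (for n = 0 this is the one-point probability space).\<close>
definition lebesgue_n :: "nat \<Rightarrow> (nat \<Rightarrow> real) measure" where
  "lebesgue_n n = PiM {..<n} (\<lambda>_. lborel)"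

definition sq_int_sym_kernel :: "nat \<Rightarrow> ((nat \<Rightarrow> real) \<Rightarrow> complex) \<Rightarrow> bool" where
  "sq_int_sym_kernel n f \<longleftrightarrow>
     f \<in> borel_measurable (lebesgue_n n) \<and>
     integrable (lebesgue_n n) (\<lambda>x. (cmod (f x))\<^sup>2) \<and>
     (\<forall>p. p permutes {..<n} \<longrightarrow> (\<forall>x\<in>space (lebesgue_n n). f (x \<circ> p) = f x))"

definition kernel_norm_sq :: "nat \<Rightarrow> ((nat \<Rightarrow> real) \<Rightarrow> complex) \<Rightarrow> real" where
  "kernel_norm_sq n f = (LINT x|lebesgue_n n. (cmod (f x))\<^sup>2)"

text \<open>Membership in the Malliavin--Watanabe--Sobolev space D^{alpha,2}, for the chaos
  series with kernels Fk: sum_n (1 + n^alpha) n! |Fk n|^2 < infinity.\<close>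
definition in_D :: "real \<Rightarrow> (nat \<Rightarrow> (nat \<Rightarrow> real) \<Rightarrow> complex) \<Rightarrow> bool" where
  "in_D \<alpha> Fk \<longleftrightarrow> (\<forall>n. sq_int_sym_kernel n (Fk n)) \<and>
     summable (\<lambda>n. (1 + real n powr \<alpha>) * fact n * kernel_norm_sq n (Fk n))"

text \<open>The integral int |SF(lambda u)|^2 d nu(u), where SF(lambda u) = sum_n lambda^n mon n u
  is understood as an L^2(nu) series: the value is the limit of the squared
  L^2(nu) norms of its partial sums.\<close>
definition S_energy :: "'u measure \<Rightarrow> (nat \<Rightarrow> 'u \<Rightarrow> complex) \<Rightarrow> real \<Rightarrow> real" where
  "S_energy \<nu> mon lam =
     lim (\<lambda>N. LINT u|\<nu>. (cmod (\<Sum>n<N. complex_of_real lam ^ n * mon n u))\<^sup>2)"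

end

theory Submission
  imports Defs
begin

text \<open>By orthogonality of the monomials, the energy \<open>E(\<lambda>) = \<integral> |SF(\<lambda>u)|\<^sup>2 d\<nu>(u)\<close>
  is the power series \<open>\<Sum>\<^sub>n a\<^sub>n \<lambda>\<^sup>2\<^sup>n\<close> with \<open>a\<^sub>n = n! |F\<^sup>(\<^sup>n\<^sup>)|\<^sup>2\<close> on \<open>]-1, 1[\<close>.
  Differentiating termwise, the \<open>m\<close>-th derivative of a power series \<open>\<Sum>\<^sub>k b\<^sub>k \<lambda>\<^sup>k\<close> with
  nonnegative coefficients has the nonnegative coefficients \<open>(k+1)\<cdots>(k+m) b\<^sub>k\<^sub>+\<^sub>m\<close>, so by
  monotone convergence as \<open>\<lambda> \<rightarrow> 1\<close> it is bounded on \<open>]0, 1[\<close> iff these coefficients are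
  summable. As \<open>(k+1)\<cdots>(k+m)\<close> is comparable to \<open>(k+m)\<^sup>m\<close>, this means
  \<open>\<Sum>\<^sub>k k\<^sup>m b\<^sub>k < \<infinity>\<close>, i.e. \<open>\<Sum>\<^sub>n n\<^sup>m a\<^sub>n < \<infinity>\<close>, which is membership in \<open>D\<^sup>m\<^sup>,\<^sup>2\<close>.\<close>

lemma integral_cmod_sum_sq_orthogonal:
  fixes M :: "'a measure" and f :: "nat \<Rightarrow> 'a \<Rightarrow> complex" and c :: "nat \<Rightarrow> complex"
  assumes meas: "\<And>n. f n \<in> borel_measurable M"
    and L2: "\<And>n. integrable M (\<lambda>u. (cmod (f n u))\<^sup>2)"
    and orth: "\<And>n k. n \<noteq> k \<Longrightarrow> (LINT u|M. f n u * cnj (f k u)) = 0"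
    and "finite I"
  shows "(LINT u|M. (cmod (\<Sum>n\<in>I. c n * f n u))\<^sup>2)
       = (\<Sum>n\<in>I. (cmod (c n))\<^sup>2 * (LINT u|M. (cmod (f n u))\<^sup>2))"
proof -
  have [measurable]: "f n \<in> borel_measurable M" for n
    using meas .
  have [measurable]: "cnj \<in> borel_measurable borel"
    by (intro borel_measurable_continuous_onI continuous_on_cnj continuous_on_id)
  have integrable_products: "integrable M (\<lambda>u. f n u * cnj (f k u))" for n k
  proof (rule Bochner_Integration.integrable_bound)
    show "integrable M (\<lambda>u. (cmod (f n u))\<^sup>2 + (cmod (f k u))\<^sup>2)"
      using L2 by auto
    show "AE u in M. norm (f n u * cnj (f k u)) \<le> norm ((cmod (f n u))\<^sup>2 + (cmod (f k u))\<^sup>2)"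
    proof (intro AE_I2)
      fix u
      have "cmod (f n u) * cmod (f k u) \<le> (cmod (f n u))\<^sup>2 + (cmod (f k u))\<^sup>2"
        using sum_squares_bound[of "cmod (f n u)" "cmod (f k u)"]
          mult_nonneg_nonneg[OF norm_ge_zero norm_ge_zero, of "f n u" "f k u"]
        by linarith
      then show "norm (f n u * cnj (f k u)) \<le> norm ((cmod (f n u))\<^sup>2 + (cmod (f k u))\<^sup>2)"
        by (simp add: norm_mult)
    qed
  qed measurable
  have "complex_of_real (LINT u|M. (cmod (\<Sum>n\<in>I. c n * f n u))\<^sup>2)
      = (LINT u|M. (\<Sum>n\<in>I. c n * f n u) * cnj (\<Sum>n\<in>I. c n * f n u))"
    by (simp only: complex_norm_square[symmetric] integral_complex_of_real)
  also have "\<dots> = (LINT u|M. (\<Sum>n\<in>I. \<Sum>k\<in>I. (c n * cnj (c k)) * (f n u * cnj (f k u))))"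
    by (simp add: cnj_sum sum_product mult_ac)
  also have "\<dots> = (\<Sum>n\<in>I. \<Sum>k\<in>I. (c n * cnj (c k)) * (LINT u|M. f n u * cnj (f k u)))"
    using integrable_products by (simp add: integral_sum)
  also have "\<dots> = (\<Sum>n\<in>I. \<Sum>k\<in>I. if k = n then (c n * cnj (c n)) * (LINT u|M. f n u * cnj (f n u)) else 0)"
    by (intro sum.cong refl) (auto simp: orth)
  also have "\<dots> = (\<Sum>n\<in>I. (c n * cnj (c n)) * (LINT u|M. f n u * cnj (f n u)))"
    using \<open>finite I\<close> by simp
  also have "\<dots> = complex_of_real (\<Sum>n\<in>I. (cmod (c n))\<^sup>2 * (LINT u|M. (cmod (f n u))\<^sup>2))"
    by (simp add: complex_norm_square[symmetric] flip: integral_complex_of_real)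
  finally show ?thesis
    by (simp only: of_real_eq_iff)
qed

definition even_coeffs :: "(nat \<Rightarrow> 'a::zero) \<Rightarrow> nat \<Rightarrow> 'a" where
  "even_coeffs a k = (if even k then a (k div 2) else 0)"

lemma even_coeffs_nonneg: "(\<And>n. a n \<ge> 0) \<Longrightarrow> even_coeffs a k \<ge> (0::'a::{zero,order})"
  by (simp add: even_coeffs_def)

lemma sums_even_coeffs_iff:
  fixes a w :: "nat \<Rightarrow> 'a::{real_normed_algebra}"
  shows "(\<lambda>k. even_coeffs a k * w k) sums s \<longleftrightarrow> (\<lambda>n. a n * w (2 * n)) sums s"
proof -
  have "(\<lambda>n. even_coeffs a (2 * n) * w (2 * n)) sums s \<longleftrightarrow> (\<lambda>k. even_coeffs a k * w k) sums s"
    by (rule sums_mono_reindex) (auto simp: strict_mono_def even_coeffs_def elim!: evenE)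
  then show ?thesis
    by (simp add: even_coeffs_def)
qed

lemma summable_even_coeffs_iff:
  fixes a w :: "nat \<Rightarrow> 'a::{real_normed_algebra}"
  shows "summable (\<lambda>k. even_coeffs a k * w k) \<longleftrightarrow> summable (\<lambda>n. a n * w (2 * n))"
  by (simp add: summable_def sums_even_coeffs_iff)

lemma summable_even_coeffs_times_power_iff:
  fixes a :: "nat \<Rightarrow> real"
  shows "summable (\<lambda>k. even_coeffs a k * real k ^ m) \<longleftrightarrow> summable (\<lambda>n. a n * real n ^ m)"
  using summable_even_coeffs_iff[of a "\<lambda>k. real k ^ m"]
  by (simp add: power_mult_distrib mult.left_commute[of _ "2 ^ m"])

lemma summable_even_coeffs_power_series:
  fixes a :: "nat \<Rightarrow> real"
  assumes "summable a" and nonneg: "\<And>n. a n \<ge> 0" and "\<bar>x\<bar> < 1"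
  shows "summable (\<lambda>k. even_coeffs a k * x ^ k)"
proof -
  have "norm (a n * x ^ (2 * n)) \<le> a n" for n
  proof -
    have "norm (a n * x ^ (2 * n)) = a n * \<bar>x\<bar> ^ (2 * n)"
      using nonneg[of n] by (simp add: abs_mult power_abs)
    also have "\<dots> \<le> a n"
      using \<open>\<bar>x\<bar> < 1\<close> nonneg[of n] by (intro mult_left_le power_le_one) auto
    finally show ?thesis .
  qed
  with \<open>summable a\<close> have "summable (\<lambda>n. a n * x ^ (2 * n))"
    by (rule summable_comparison_test')
  then show ?thesis
    using summable_even_coeffs_iff[of a "\<lambda>k. x ^ k"] by simp
qed

lemma S_energy_eq_power_series:
  fixes \<nu> :: "'u measure" and mon :: "nat \<Rightarrow> 'u \<Rightarrow> complex"
  defines "A \<equiv> \<lambda>n. LINT u|\<nu>. (cmod (mon n u))\<^sup>2"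
  assumes meas: "\<And>n. mon n \<in> borel_measurable \<nu>"
    and L2: "\<And>n. integrable \<nu> (\<lambda>u. (cmod (mon n u))\<^sup>2)"
    and orth: "\<And>n k. n \<noteq> k \<Longrightarrow> (LINT u|\<nu>. mon n u * cnj (mon k u)) = 0"
    and summable: "summable (\<lambda>k. even_coeffs A k * x ^ k)"
  shows "S_energy \<nu> mon x = (\<Sum>k. even_coeffs A k * x ^ k)"
proof -
  have partial_sums: "(LINT u|\<nu>. (cmod (\<Sum>n<N. complex_of_real x ^ n * mon n u))\<^sup>2)
      = (\<Sum>n<N. A n * x ^ (2 * n))" for N
    using integral_cmod_sum_sq_orthogonal[where f = mon, OF meas L2 orth,
        where I = "{..<N}" and c = "\<lambda>n. complex_of_real x ^ n"]
    by (simp add: A_def norm_power power_even_abs mult.commute flip: power_mult)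
  have "(\<lambda>n. A n * x ^ (2 * n)) sums (\<Sum>k. even_coeffs A k * x ^ k)"
    using summable_sums[OF summable] sums_even_coeffs_iff[of A "\<lambda>k. x ^ k"] by simp
  then show ?thesis
    unfolding S_energy_def partial_sums sums_def by (rule limI)
qed

lemma funpow_diffs:
  "(diffs ^^ k) c n = pochhammer (of_nat n + 1) k * c (n + k)"
proof (induction k arbitrary: n)
  case (Suc k)
  then show ?case
    by (simp add: diffs_def pochhammer_rec algebra_simps)
qed simp

lemma summable_funpow_diffs:
  fixes c :: "nat \<Rightarrow> 'a::{real_normed_field,banach}"
  assumes "\<And>z. norm z < K \<Longrightarrow> summable (\<lambda>n. c n * z ^ n)" and "norm z < K"
  shows "summable (\<lambda>n. (diffs ^^ k) c n * z ^ n)"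
  using assms(2)
proof (induction k arbitrary: z)
  case (Suc k)
  then show ?case
    using termdiff_converges[of z K "(diffs ^^ k) c"] by simp
qed (use assms(1) in simp)

lemma higher_deriv_power_series:
  fixes c :: "nat \<Rightarrow> 'a::{real_normed_field,banach}"
  assumes f: "\<And>z. norm z < K \<Longrightarrow> f z = (\<Sum>n. c n * z ^ n)"
    and summable: "\<And>z. norm z < K \<Longrightarrow> summable (\<lambda>n. c n * z ^ n)"
    and "norm z < K"
  shows "(deriv ^^ k) f z = (\<Sum>n. (diffs ^^ k) c n * z ^ n)"
  using assms(3)
proof (induction k arbitrary: z)
  case (Suc k)
  have "((\<lambda>z. \<Sum>n. (diffs ^^ k) c n * z ^ n) has_field_derivative
          (\<Sum>n. (diffs ^^ Suc k) c n * z ^ n)) (at z)"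
    using termdiffs_strong'[OF summable_funpow_diffs[OF summable] Suc.prems] by simp
  then have "((deriv ^^ k) f has_field_derivative (\<Sum>n. (diffs ^^ Suc k) c n * z ^ n)) (at z)"
  proof (rule has_field_derivative_transform_within_open[where S = "ball 0 K"])
    show "(\<Sum>n. (diffs ^^ k) c n * w ^ n) = (deriv ^^ k) f w" if "w \<in> ball 0 K" for w
      using Suc.IH[of w] that by simp
  qed (use Suc.prems in simp_all)
  then show ?case
    by (simp add: DERIV_imp_deriv)
qed (use f in simp)

lemma bdd_above_power_series_iff_summable:
  fixes c :: "nat \<Rightarrow> real"
  assumes nonneg: "\<And>n. c n \<ge> 0"
    and summable: "\<And>x. x \<in> {0<..<1} \<Longrightarrow> summable (\<lambda>n. c n * x ^ n)"
  shows "bdd_above ((\<lambda>x. \<Sum>n. c n * x ^ n) ` {0<..<1}) \<longleftrightarrow> summable c"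
proof
  assume "bdd_above ((\<lambda>x. \<Sum>n. c n * x ^ n) ` {0<..<1})"
  then obtain B where B: "\<And>x. x \<in> {0<..<1} \<Longrightarrow> (\<Sum>n. c n * x ^ n) \<le> B"
    unfolding bdd_above_def by blast
  show "summable c"
  proof (rule bounded_imp_summable[OF nonneg])
    fix N
    have "eventually (\<lambda>x. (\<Sum>n\<le>N. c n * x ^ n) \<le> B) (at_left (1::real))"
    proof (rule eventually_mono[OF eventually_at_left_real[OF zero_less_one]])
      fix x :: real
      assume x: "x \<in> {0<..<1}"
      have "(\<Sum>n\<le>N. c n * x ^ n) \<le> (\<Sum>n. c n * x ^ n)"
        using x nonneg by (intro sum_le_suminf summable) auto
      also have "\<dots> \<le> B"
        using B x .
      finally show "(\<Sum>n\<le>N. c n * x ^ n) \<le> B" .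
    qed
    moreover have "((\<lambda>x. \<Sum>n\<le>N. c n * x ^ n) \<longlongrightarrow> (\<Sum>n\<le>N. c n * 1 ^ n)) (at_left 1)"
      by (intro tendsto_intros)
    ultimately show "(\<Sum>n\<le>N. c n) \<le> B"
      using tendsto_le[OF trivial_limit_at_left_real tendsto_const] by simp
  qed
next
  assume "summable c"
  have "(\<Sum>n. c n * x ^ n) \<le> (\<Sum>n. c n)" if "x \<in> {0<..<1}" for x
    using that nonneg \<open>summable c\<close>
    by (intro suminf_le summable) (auto simp: mult_left_le power_le_one)
  then show "bdd_above ((\<lambda>x. \<Sum>n. c n * x ^ n) ` {0<..<1})"
    by (intro bdd_aboveI2) blast
qed

lemma pochhammer_le_power: "pochhammer (real n + 1) m \<le> (real n + real m) ^ m"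
proof -
  have "pochhammer (real n + 1) m = (\<Prod>i<m. real n + 1 + real i)"
    by (simp add: pochhammer_prod atLeast0LessThan)
  also have "\<dots> \<le> (\<Prod>i<m. real n + real m)"
    by (rule prod_mono) auto
  finally show ?thesis
    by simp
qed

lemma power_le_pochhammer: "(real n + real m) ^ m \<le> real m ^ m * pochhammer (real n + 1) m"
proof -
  have "real n + real m \<le> real m * (real n + 1)" if "m \<noteq> 0"
    using mult_right_mono[of 1 "real m" "real n"] that by (simp add: algebra_simps)
  then have "(real n + real m) ^ m \<le> (real m * (real n + 1)) ^ m"
    by (cases "m = 0") (auto intro!: power_mono)
  also have "\<dots> = real m ^ m * (\<Prod>i<m. real n + 1)"
    by (simp add: power_mult_distrib)
  also have "\<dots> \<le> real m ^ m * (\<Prod>i<m. real n + 1 + real i)"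
    by (intro mult_left_mono prod_mono) auto
  finally show ?thesis
    by (simp add: pochhammer_prod atLeast0LessThan)
qed

lemma summable_funpow_diffs_iff:
  fixes c :: "nat \<Rightarrow> real"
  assumes nonneg: "\<And>n. c n \<ge> 0"
  shows "summable ((diffs ^^ m) c) \<longleftrightarrow> summable (\<lambda>n. c n * real n ^ m)"
proof -
  define d where "d n = (real n + real m) ^ m * c (n + m)" for n
  have "summable ((diffs ^^ m) c) \<longleftrightarrow> summable d"
  proof
    assume "summable ((diffs ^^ m) c)"
    then have "summable (\<lambda>n. real m ^ m * (diffs ^^ m) c n)"
      by (rule summable_mult)
    moreover have "norm (d n) \<le> real m ^ m * (diffs ^^ m) c n" for n
    proof -
      have "norm (d n) = (real n + real m) ^ m * c (n + m)"
        by (simp add: d_def nonneg)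
      also have "\<dots> \<le> (real m ^ m * pochhammer (real n + 1) m) * c (n + m)"
        by (intro mult_right_mono power_le_pochhammer nonneg)
      also have "\<dots> = real m ^ m * (diffs ^^ m) c n"
        by (simp only: funpow_diffs mult.assoc)
      finally show ?thesis .
    qed
    ultimately show "summable d"
      by (rule summable_comparison_test')
  next
    assume "summable d"
    moreover have "norm ((diffs ^^ m) c n) \<le> d n" for n
    proof -
      have "norm ((diffs ^^ m) c n) = pochhammer (real n + 1) m * c (n + m)"
        by (simp add: funpow_diffs nonneg pochhammer_nonneg)
      also have "\<dots> \<le> d n"
        unfolding d_def by (intro mult_right_mono pochhammer_le_power nonneg)
      finally show ?thesis .
    qed
    ultimately show "summable ((diffs ^^ m) c)"
      by (rule summable_comparison_test')
  qed
  also have "\<dots> \<longleftrightarrow> summable (\<lambda>n. c n * real n ^ m)"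
    unfolding d_def using summable_iff_shift[of "\<lambda>n. c n * real n ^ m" m] by (simp add: mult.commute)
  finally show ?thesis .
qed

lemma bdd_above_higher_deriv_iff_summable:
  fixes c :: "nat \<Rightarrow> real"
  assumes nonneg: "\<And>n. c n \<ge> 0"
    and f: "\<And>x. \<bar>x\<bar> < 1 \<Longrightarrow> f x = (\<Sum>n. c n * x ^ n)"
    and summable: "\<And>x. \<bar>x\<bar> < 1 \<Longrightarrow> summable (\<lambda>n. c n * x ^ n)"
  shows "bdd_above ((deriv ^^ m) f ` {0<..<1}) \<longleftrightarrow> summable (\<lambda>n. c n * real n ^ m)"
proof -
  have derivs: "(deriv ^^ m) f ` {0<..<1} = (\<lambda>x. \<Sum>n. (diffs ^^ m) c n * x ^ n) ` {0<..<1}"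
    by (rule image_cong[OF refl], rule higher_deriv_power_series[where K = 1])
       (use f summable in auto)
  have "bdd_above ((\<lambda>x. \<Sum>n. (diffs ^^ m) c n * x ^ n) ` {0<..<1}) \<longleftrightarrow> summable ((diffs ^^ m) c)"
  proof (rule bdd_above_power_series_iff_summable)
    show "(diffs ^^ m) c n \<ge> 0" for n
      by (simp add: funpow_diffs nonneg pochhammer_nonneg)
    show "summable (\<lambda>n. (diffs ^^ m) c n * x ^ n)" if "x \<in> {0<..<1}" for x :: real
      by (rule summable_funpow_diffs[where K = 1]) (use summable that in auto)
  qed
  then show ?thesis
    by (simp only: derivs summable_funpow_diffs_iff[OF nonneg])
qed

lemma in_D_iff_summable_weighted:
  assumes "\<forall>n. sq_int_sym_kernel n (Fk n)"
    and summable: "summable (\<lambda>n. fact n * kernel_norm_sq n (Fk n))"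
  shows "in_D (real m) Fk \<longleftrightarrow> summable (\<lambda>n. fact n * kernel_norm_sq n (Fk n) * real n ^ m)"
proof -
  let ?a = "\<lambda>n. fact n * kernel_norm_sq n (Fk n)"
  have "in_D (real m) Fk \<longleftrightarrow> summable (\<lambda>n. (1 + real n powr real m) * ?a n)"
    using assms(1) by (simp add: in_D_def mult.assoc)
  also have "\<dots> \<longleftrightarrow> summable (\<lambda>n. ?a n + ?a n * real n ^ m)"
  proof (rule summable_cong)
    show "eventually (\<lambda>n. (1 + real n powr real m) * ?a n = ?a n + ?a n * real n ^ m) sequentially"
      using eventually_gt_at_top[of "0::nat"]
      by eventually_elim (simp add: powr_realpow algebra_simps)
  qed
  also have "\<dots> \<longleftrightarrow> summable (\<lambda>n. ?a n * real n ^ m)"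
  proof
    assume "summable (\<lambda>n. ?a n + ?a n * real n ^ m)"
    from summable_diff[OF this summable] show "summable (\<lambda>n. ?a n * real n ^ m)"
      by simp
  qed (rule summable_add[OF summable])
  finally show ?thesis .
qed

theorem theorem2p8:
  fixes Fk :: "nat \<Rightarrow> (nat \<Rightarrow> real) \<Rightarrow> complex"
    and \<nu> :: "'u measure"
    and mon :: "nat \<Rightarrow> 'u \<Rightarrow> complex"
    and m :: nat
  assumes kernels: "\<forall>n. sq_int_sym_kernel n (Fk n)"
    and F_L2: "summable (\<lambda>n. fact n * kernel_norm_sq n (Fk n))"
    and nu_prob: "prob_space \<nu>"
    and mono_meas: "\<forall>n. mon n \<in> borel_measurable \<nu>"
    and mono_L2: "\<forall>n. integrable \<nu> (\<lambda>u. (cmod (mon n u))\<^sup>2)"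
    and mono_orth: "\<forall>n k. n \<noteq> k \<longrightarrow> (LINT u|\<nu>. mon n u * cnj (mon k u)) = 0"
    and mono_norm: "\<forall>n. (LINT u|\<nu>. (cmod (mon n u))\<^sup>2) = fact n * kernel_norm_sq n (Fk n)"
  shows "in_D (real m) Fk \<longleftrightarrow>
           bdd_above ((\<lambda>lam. (deriv ^^ m) (S_energy \<nu> mon) lam) ` {0<..<1})"
proof -
  define A where "A = (\<lambda>n. LINT u|\<nu>. (cmod (mon n u))\<^sup>2)"
  have A_eq: "A = (\<lambda>n. fact n * kernel_norm_sq n (Fk n))"
    using mono_norm by (simp add: A_def fun_eq_iff)
  have A_nonneg: "A n \<ge> 0" for n
    unfolding A_def by (rule integral_nonneg_AE) simp
  have summable: "summable (\<lambda>k. even_coeffs A k * x ^ k)" if "\<bar>x\<bar> < 1" for x :: real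
    by (rule summable_even_coeffs_power_series) (use F_L2 A_eq A_nonneg that in auto)
  have energy: "S_energy \<nu> mon x = (\<Sum>k. even_coeffs A k * x ^ k)" if "\<bar>x\<bar> < 1" for x :: real
    unfolding A_def
    by (rule S_energy_eq_power_series)
       (use mono_meas mono_L2 mono_orth summable[OF that, unfolded A_def] in simp_all)
  have "in_D (real m) Fk \<longleftrightarrow> summable (\<lambda>n. A n * real n ^ m)"
    using in_D_iff_summable_weighted[OF kernels F_L2] by (simp add: A_eq)
  also have "\<dots> \<longleftrightarrow> summable (\<lambda>k. even_coeffs A k * real k ^ m)"
    by (rule summable_even_coeffs_times_power_iff[symmetric])
  also have "\<dots> \<longleftrightarrow> bdd_above ((deriv ^^ m) (S_energy \<nu> mon) ` {0<..<1})"
    by (rule bdd_above_higher_deriv_iff_summable[symmetric])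
       (use A_nonneg even_coeffs_nonneg energy summable in auto)
  finally show ?thesis .
qed

end
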